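(* Let $p$ be an odd prime. Then \[ Z^{+}(p)\equiv B_{2(p-1)}-B_{p-1}-\tfrac{1}{2}H_{\frac{p-1}{2}}\pmod{p} \] and \[ Z^{+}(p)\equiv\tfrac{1}{2}\left(M_{0}(p)+M_{\frac{p-1}{2}}(p)\right)\pmod{p}, \] where $M_{k}(p)=\frac{1+(-1)^{k}k!(p-k-1)!}{p}$ and $Z^{+}(p)=\sum_{k=0}^{p-1}(-1)^kM_k(p)$.
   Context: $B_m$ are the Bernoulli numbers defined by $\frac{x}{e^{x}-1}=\sum_{m\ge0}B_m\frac{x^m}{m!}$. $H_k=\sum_{j=1}^k\frac1j$. For rationals $a,b$, $a\equiv b\pmod p$ means $a-b=pc$ for a rational $c$ whose denominator is coprime to $p$. *)

theory Defs
  imports "HOL-Computational_Algebra.Computational_Algebra" "HOL-Number_Theory.Number_Theory"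
begin

definition bernoulli_fps :: "rat fps" where
  "bernoulli_fps = fps_X / (fps_exp 1 - 1)"

definition bernoulli :: "nat \<Rightarrow> rat" where
  "bernoulli m = fact m * fps_nth bernoulli_fps m"

definition harmonic :: "nat \<Rightarrow> rat" where
  "harmonic k = (\<Sum>j=1..k. 1 / of_nat j)"

definition rat_cong :: "rat \<Rightarrow> rat \<Rightarrow> nat \<Rightarrow> bool" where
  "rat_cong a b p \<longleftrightarrow> (\<exists>c. a - b = of_nat p * c \<and> coprime (snd (quotient_of c)) (int p))"

definition M :: "nat \<Rightarrow> nat \<Rightarrow> rat" where
  "M k p = (1 + (-1)^k * fact k * fact (p - k - 1)) / of_nat p"

definition Zplus :: "nat \<Rightarrow> rat" where
  "Zplus p = (\<Sum>k=0..p-1. (-1)^k * M k p)"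

end

theory Submission
  imports Defs
begin

(*
  Let (p-1)! = pW - 1 (Wilson). Because k!(p-1-k)! = (p-1)!/C(p-1,k) and
  (-1)^k C(p-1,k) = (1 - p/1)...(1 - p/k) == 1 - p H_k (mod p^2), every k < p satisfies
  M_k == W - H_k (mod p). Summing with alternating signs over k <= p - 1 = 2h gives
  Z+(p) == W - H_h/2, and the second congruence follows from M_0 == W and M_h == W - H_h.

  For the first one it remains to show B_(2(p-1)) - B_(p-1) == W (mod p). Faulhaber's formula
  shows that p B_n is p-integral and that p B_n == 1^n + ... + (p-1)^n (mod p^2) for even n >= 4
  when p >= 5. On the other hand, the product of the j^(p-1) == 1 (mod p) is
  ((p-1)!)^(p-1) = (1 - pW)^(p-1) == 1 + pW (mod p^2), which gives Lerch's formula
  sum_j (j^(p-1) - 1) == pW and hence sum_j (j^(2(p-1)) - j^(p-1)) == pW (mod p^2).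
  The case p = 3 is a direct computation.
*)

definition coprime_denom :: "nat \<Rightarrow> rat \<Rightarrow> bool" where
  "coprime_denom m x \<longleftrightarrow> coprime (snd (quotient_of x)) (int m)"

lemma coprime_denom_iff:
  "coprime_denom m x \<longleftrightarrow> (\<exists>a b. b \<noteq> 0 \<and> coprime b (int m) \<and> x = of_int a / of_int b)"
proof
  assume "coprime_denom m x"
  moreover obtain a b where q: "quotient_of x = (a, b)"
    by fastforce
  ultimately show "\<exists>a b. b \<noteq> 0 \<and> coprime b (int m) \<and> x = of_int a / of_int b"
    using quotient_of_div[OF q] quotient_of_denom_pos[OF q]
    by (intro exI[of _ a] exI[of _ b]) (auto simp: coprime_denom_def)
next
  assume "\<exists>a b. b \<noteq> 0 \<and> coprime b (int m) \<and> x = of_int a / of_int b"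
  then obtain a b where "b \<noteq> 0" and b: "coprime b (int m)" and x: "x = of_int a / of_int b"
    by blast
  obtain a' b' where q: "quotient_of x = (a', b')"
    by fastforce
  have "of_int a' / of_int b' = (of_int a / of_int b :: rat)"
    using quotient_of_div[OF q] x by simp
  then have "a' * b = a * b'"
    using \<open>b \<noteq> 0\<close> quotient_of_denom_pos[OF q] by (simp add: field_simps flip: of_int_mult)
  then have "b' dvd b * a'"
    by (simp add: mult.commute)
  then have "b' dvd b"
    using quotient_of_coprime[OF q] by (simp add: coprime_commute coprime_dvd_mult_left_iff)
  then have "coprime b' (int m)"
    using b by (rule coprime_divisors[OF _ dvd_refl])
  then show "coprime_denom m x"
    using q by (simp add: coprime_denom_def)
qed

lemma coprime_denom_fraction:
  assumes "coprime b (int m)"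
  shows "coprime_denom m (of_int a / of_int b)"
proof (cases "b = 0")
  case True
  then show ?thesis
    by (simp add: coprime_denom_def)
next
  case False
  then show ?thesis
    using assms unfolding coprime_denom_iff by blast
qed

lemma coprime_denom_of_int [simp]: "coprime_denom m (of_int k)"
  using coprime_denom_fraction[of 1 m k] by simp

lemma coprime_denom_of_nat [simp]: "coprime_denom m (of_nat k)"
  using coprime_denom_of_int[of m "int k"] by simp

lemma coprime_denom_0 [simp]: "coprime_denom m 0"
  and coprime_denom_1 [simp]: "coprime_denom m 1"
  using coprime_denom_of_nat[of m 0] coprime_denom_of_nat[of m 1] by simp_all

lemma coprime_denom_add:
  assumes "coprime_denom m x" "coprime_denom m y"
  shows "coprime_denom m (x + y)"
proof -
  obtain a b c d where b: "b \<noteq> 0" "coprime b (int m)" and x: "x = of_int a / of_int b"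
    and d: "d \<noteq> 0" "coprime d (int m)" and y: "y = of_int c / of_int d"
    using assms unfolding coprime_denom_iff by blast
  have "x + y = of_int (a * d + c * b) / of_int (b * d)"
    unfolding x y using b d by (simp add: add_frac_eq)
  then show ?thesis
    using b d coprime_denom_fraction[of "b * d" m "a * d + c * b"] by simp
qed

lemma coprime_denom_mult:
  assumes "coprime_denom m x" "coprime_denom m y"
  shows "coprime_denom m (x * y)"
proof -
  obtain a b c d where "coprime b (int m)" "x = of_int a / of_int b"
    "coprime d (int m)" "y = of_int c / of_int d"
    using assms unfolding coprime_denom_iff by blast
  then show ?thesis
    using coprime_denom_fraction[of "b * d" m "a * c"] by simp
qed

lemma coprime_denom_uminus: "coprime_denom m x \<Longrightarrow> coprime_denom m (- x)"
  using coprime_denom_mult[OF coprime_denom_of_int[of m "-1"], of x] by simp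

lemma coprime_denom_diff:
  "coprime_denom m x \<Longrightarrow> coprime_denom m y \<Longrightarrow> coprime_denom m (x - y)"
  using coprime_denom_add[of m x "- y"] coprime_denom_uminus[of m y] by simp

lemma coprime_denom_sum:
  "(\<And>i. i \<in> A \<Longrightarrow> coprime_denom m (f i)) \<Longrightarrow> coprime_denom m (\<Sum>i\<in>A. f i)"
  by (induction A rule: infinite_finite_induct) (auto intro: coprime_denom_add)

lemma coprime_denom_power: "coprime_denom m x \<Longrightarrow> coprime_denom m (x ^ n)"
  by (induction n) (auto intro: coprime_denom_mult)

lemma coprime_denom_modulus_power:
  "n > 0 \<Longrightarrow> coprime_denom (m ^ n) x \<longleftrightarrow> coprime_denom m x"
  by (simp add: coprime_denom_def)

lemma coprime_denom_inverse:
  "coprime j m \<Longrightarrow> coprime_denom m (1 / of_nat j)"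
  using coprime_denom_fraction[of "int j" m 1] by simp

lemma coprime_denom_inverse_less_prime:
  assumes "prime p" "0 < j" "j < p"
  shows "coprime_denom p (1 / of_nat j)"
proof -
  have "\<not> p dvd j"
    using assms(2,3) by (auto dest: dvd_imp_le)
  then have "coprime p j"
    by (rule prime_imp_coprime[OF assms(1)])
  then show ?thesis
    by (simp add: coprime_denom_inverse coprime_commute)
qed

lemma coprime_denom_prime_power_divide:
  assumes "prime p" "0 < m" "m < p ^ Suc a"
  shows "coprime_denom p (of_nat p ^ a / of_nat m)"
proof -
  define e where "e = multiplicity p m"
  have "m \<noteq> 0" "\<not> is_unit p"
    using assms(2) not_prime_unit[of p] assms(1) by blast+
  then obtain r where m: "m = p ^ e * r" and r: "\<not> p dvd r"
    unfolding e_def by (rule multiplicity_decompose')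
  have "p ^ e \<le> m"
    unfolding e_def using multiplicity_dvd assms(2) by (rule dvd_imp_le)
  then have "p ^ e < p ^ Suc a"
    using assms(3) by linarith
  then have "e < Suc a"
    by (rule power_less_imp_less_exp[OF prime_gt_1_nat[OF assms(1)]])
  then have "e \<le> a"
    by simp
  then have "(of_nat p ^ a :: rat) = of_nat p ^ e * of_nat p ^ (a - e)"
    by (simp flip: power_add)
  moreover have "(of_nat m :: rat) = of_nat p ^ e * of_nat r"
    using m by simp
  moreover have "(of_nat p :: rat) \<noteq> 0"
    using assms(1) prime_gt_0_nat by simp
  ultimately have "(of_nat p ^ a / of_nat m :: rat) = of_nat p ^ (a - e) * (1 / of_nat r)"
    by simp
  moreover have "coprime r p"
    using prime_imp_coprime[OF assms(1) r] by (simp add: coprime_commute)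
  ultimately show ?thesis
    using coprime_denom_mult[OF coprime_denom_power coprime_denom_inverse] by simp
qed

lemma rat_cong_iff: "rat_cong a b m \<longleftrightarrow> (\<exists>c. a - b = of_nat m * c \<and> coprime_denom m c)"
  by (simp add: rat_cong_def coprime_denom_def)

lemma rat_congI: "a - b = of_nat m * c \<Longrightarrow> coprime_denom m c \<Longrightarrow> rat_cong a b m"
  unfolding rat_cong_iff by blast

lemma rat_congE:
  assumes "rat_cong a b m"
  obtains c where "a - b = of_nat m * c" "coprime_denom m c"
  using assms unfolding rat_cong_iff by blast

lemma rat_cong_refl [simp]: "rat_cong a a m"
  by (rule rat_congI[of _ _ _ 0]) simp_all

lemma rat_cong_sym:
  assumes "rat_cong a b m"
  shows "rat_cong b a m"
proof -
  obtain c where "a - b = of_nat m * c" "coprime_denom m c"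
    using assms by (rule rat_congE)
  then show ?thesis
    by (intro rat_congI[of _ _ _ "- c"]) (simp_all add: algebra_simps coprime_denom_uminus)
qed

lemma rat_cong_add:
  assumes "rat_cong a b m" "rat_cong c d m"
  shows "rat_cong (a + c) (b + d) m"
proof -
  obtain x y where "a - b = of_nat m * x" "coprime_denom m x"
    "c - d = of_nat m * y" "coprime_denom m y"
    using assms by (meson rat_congE)
  then show ?thesis
    by (intro rat_congI[of _ _ _ "x + y"]) (simp_all add: algebra_simps coprime_denom_add)
qed

lemma rat_cong_diff:
  assumes "rat_cong a b m" "rat_cong c d m"
  shows "rat_cong (a - c) (b - d) m"
proof -
  obtain x y where "a - b = of_nat m * x" "coprime_denom m x"
    "c - d = of_nat m * y" "coprime_denom m y"
    using assms by (meson rat_congE)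
  then show ?thesis
    by (intro rat_congI[of _ _ _ "x - y"]) (simp_all add: algebra_simps coprime_denom_diff)
qed

lemma rat_cong_trans:
  assumes "rat_cong a b m" "rat_cong b c m"
  shows "rat_cong a c m"
proof -
  obtain x y where "a - b = of_nat m * x" "coprime_denom m x"
    "b - c = of_nat m * y" "coprime_denom m y"
    using assms by (meson rat_congE)
  then show ?thesis
    by (intro rat_congI[of _ _ _ "x + y"]) (simp_all add: algebra_simps coprime_denom_add)
qed

lemma rat_cong_mult_left:
  assumes "rat_cong a b m" "coprime_denom m c"
  shows "rat_cong (c * a) (c * b) m"
proof -
  obtain x where "a - b = of_nat m * x" "coprime_denom m x"
    using assms(1) by (rule rat_congE)
  then show ?thesis
    using assms(2) by (intro rat_congI[of _ _ _ "c * x"])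
      (simp_all add: algebra_simps coprime_denom_mult)
qed

lemma rat_cong_sum:
  "(\<And>i. i \<in> A \<Longrightarrow> rat_cong (f i) (g i) m) \<Longrightarrow> rat_cong (\<Sum>i\<in>A. f i) (\<Sum>i\<in>A. g i) m"
  by (induction A rule: infinite_finite_induct) (auto intro: rat_cong_add)

lemma rat_cong_of_int:
  assumes "[a = b] (mod int m)"
  shows "rat_cong (of_int a) (of_int b) m"
proof -
  obtain k where "a - b = int m * k"
    using assms by (auto simp: cong_iff_dvd_diff elim: dvdE)
  then have "of_int (a - b) = (of_int (int m * k) :: rat)"
    by (simp only:)
  then show ?thesis
    by (intro rat_congI[of _ _ _ "of_int k"]) simp_all
qed

lemma rat_cong_cancel_left:
  assumes "rat_cong (of_nat k * a) (of_nat k * b) (k * m)" "k > 0"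
  shows "rat_cong a b m"
proof -
  obtain c where "of_nat k * a - of_nat k * b = of_nat (k * m) * c" "coprime_denom (k * m) c"
    using assms(1) by (rule rat_congE)
  then have "of_nat k * (a - b) = of_nat k * (of_nat m * c)" "coprime_denom m c"
    by (simp_all add: coprime_denom_def algebra_simps)
  then have "a - b = of_nat m * c" "coprime_denom m c"
    using assms(2) by simp_all
  then show ?thesis
    by (rule rat_congI)
qed

lemma coprime_denom_harmonic:
  assumes "prime p" "k < p"
  shows "coprime_denom p (harmonic k)"
  unfolding harmonic_def
  using assms by (intro coprime_denom_sum coprime_denom_inverse_less_prime) auto

lemma harmonic_Suc: "harmonic (Suc k) = harmonic k + 1 / of_nat (Suc k)"
  by (simp add: harmonic_def)

lemma coprime_binomial_pred_prime:
  assumes "prime p" "k < p"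
  shows "coprime (p - 1 choose k) p"
proof -
  have "k \<le> p - 1"
    using assms(2) by simp
  then have "(p - 1 choose k) dvd fact (p - 1)"
    using binomial_fact_lemma[of k "p - 1"] dvd_triv_right by metis
  moreover have "p > 0"
    using assms(1) by (rule prime_gt_0_nat)
  then have "\<not> p dvd fact (p - 1)"
    using assms(1) by (simp add: prime_dvd_fact_iff)
  ultimately have "\<not> p dvd (p - 1 choose k)"
    using dvd_trans by blast
  then have "coprime p (p - 1 choose k)"
    by (rule prime_imp_coprime[OF assms(1)])
  then show ?thesis
    using coprime_commute by blast
qed

lemma alternating_binomial_Suc:
  assumes "k \<le> n"
  shows "(-1) ^ Suc k * of_nat (n choose Suc k) =
    (1 - of_nat (Suc n) / of_nat (Suc k)) *
      ((-1) ^ k * (of_nat (n choose k) :: 'a :: field_char_0))"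
proof -
  define s :: 'a where "s = of_nat (Suc k)"
  have "Suc k * (n choose Suc k) = (n - k) * (n choose k)"
    by (simp only: binomial_absorption binomial_absorb_comp)
  then have "of_nat (Suc k * (n choose Suc k)) = (of_nat ((n - k) * (n choose k)) :: 'a)"
    by (rule arg_cong)
  moreover have "(of_nat (n - k) :: 'a) = of_nat (Suc n) - s"
    using assms by (simp add: of_nat_diff s_def)
  ultimately have binomial_step:
      "s * of_nat (n choose Suc k) = (of_nat (Suc n) - s) * of_nat (n choose k)"
    unfolding s_def by (simp only: of_nat_mult)
  have "s \<noteq> 0"
    unfolding s_def by (rule of_nat_neq_0)
  then have "(-1) ^ Suc k * of_nat (n choose Suc k) =
      - ((-1) ^ k * (s * of_nat (n choose Suc k))) / s"
    by simp
  also have "\<dots> = (1 - of_nat (Suc n) / s) * ((-1) ^ k * of_nat (n choose k))"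
    unfolding binomial_step using \<open>s \<noteq> 0\<close> by (simp add: field_simps)
  finally show ?thesis
    unfolding s_def .
qed

lemma alternating_binomial_pred_prime_cong:
  assumes "prime p" "k < p"
  shows "rat_cong ((-1) ^ k * of_nat (p - 1 choose k)) (1 - of_nat p * harmonic k) (p ^ 2)"
  using assms(2)
proof (induction k)
  case 0
  show ?case by (simp add: harmonic_def)
next
  case (Suc k)
  define X :: rat where "X = (-1) ^ k * of_nat (p - 1 choose k)"
  define s :: rat where "s = of_nat (Suc k)"
  have "k \<le> p - 1" "Suc (p - 1) = p"
    using Suc.prems by simp_all
  then have step: "(-1) ^ Suc k * of_nat (p - 1 choose Suc k) = (1 - of_nat p * (1 / s)) * X"
    using alternating_binomial_Suc[where 'a = rat] by (simp add: X_def s_def)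
  have s_inverse: "coprime_denom p (1 / s)"
    unfolding s_def using Suc.prems
    by (intro coprime_denom_inverse_less_prime[OF assms(1)]) simp_all
  have "coprime_denom (p ^ 2) (1 - of_nat p * (1 / s))"
    using coprime_denom_diff[OF coprime_denom_1
        coprime_denom_mult[OF coprime_denom_of_nat s_inverse]]
    by (simp add: coprime_denom_modulus_power)
  then have "rat_cong ((-1) ^ Suc k * of_nat (p - 1 choose Suc k))
      ((1 - of_nat p * (1 / s)) * (1 - of_nat p * harmonic k)) (p ^ 2)"
    unfolding step X_def using Suc by (intro rat_cong_mult_left) simp_all
  moreover have "rat_cong ((1 - of_nat p * (1 / s)) * (1 - of_nat p * harmonic k))
      (1 - of_nat p * harmonic (Suc k)) (p ^ 2)"
  proof (rule rat_congI)
    have "s \<noteq> 0" and harmonic_s: "harmonic (Suc k) = harmonic k + 1 / s"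
      by (simp_all add: s_def harmonic_Suc)
    then show "(1 - of_nat p * (1 / s)) * (1 - of_nat p * harmonic k) -
        (1 - of_nat p * harmonic (Suc k)) =
        of_nat (p ^ 2) * (harmonic k * (1 / s))"
      unfolding harmonic_s by (simp add: field_simps power2_eq_square)
    show "coprime_denom (p ^ 2) (harmonic k * (1 / s))"
      using coprime_denom_mult[OF coprime_denom_harmonic[OF assms(1)] s_inverse] Suc.prems
      by (simp add: coprime_denom_modulus_power)
  qed
  ultimately show ?case
    by (rule rat_cong_trans)
qed

definition wilson_quotient :: "nat \<Rightarrow> int" where
  "wilson_quotient p = (fact (p - 1) + 1) div int p"

lemma fact_pred_prime_eq:
  assumes "prime p"
  shows "(fact (p - 1) :: 'a :: ring_char_0) = of_nat p * of_int (wilson_quotient p) - 1"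
proof -
  have "int p dvd fact (p - 1) + 1"
    using wilson_theorem[OF assms] by (simp add: cong_iff_dvd_diff)
  then have "(fact (p - 1) :: int) = int p * wilson_quotient p - 1"
    unfolding wilson_quotient_def by simp
  then have "(of_int (fact (p - 1)) :: 'a) = of_int (int p * wilson_quotient p - 1)"
    by (rule arg_cong)
  then show ?thesis
    by simp
qed

lemma signed_fact_mult_fact_eq:
  assumes "k \<le> n"
  shows "(-1) ^ k * fact k * fact (n - k) =
    (fact n :: 'a :: field_char_0) / ((-1) ^ k * of_nat (n choose k))"
proof -
  have "fact k * fact (n - k) * of_nat (n choose k) = (fact n :: 'a)"
    using binomial_fact_lemma[OF assms] by (metis of_nat_fact of_nat_mult)
  moreover have "(-1 :: 'a) ^ k * (-1) ^ k = 1"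
    by (simp flip: power_mult_distrib)
  moreover have "(-1) ^ k * fact k * fact (n - k) * ((-1) ^ k * of_nat (n choose k)) =
      ((-1) ^ k * (-1) ^ k) * (fact k * fact (n - k) * (of_nat (n choose k) :: 'a))"
    by (simp only: mult_ac)
  moreover have "of_nat (n choose k) \<noteq> (0 :: 'a)"
    using assms by simp
  ultimately show ?thesis
    by (simp add: eq_divide_eq)
qed

lemma M_eq_binomial:
  assumes "k < p"
  shows "M k p = (1 + fact (p - 1) / ((-1) ^ k * of_nat (p - 1 choose k))) / of_nat p"
proof -
  have "p - k - 1 = p - 1 - k" "k \<le> p - 1"
    using assms by simp_all
  then show ?thesis
    unfolding M_def by (simp only: signed_fact_mult_fact_eq)
qed

lemma M_cong:
  assumes "prime p" "k < p"
  shows "rat_cong (M k p) (of_int (wilson_quotient p) - harmonic k) p"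
proof -
  define X :: rat where "X = (-1) ^ k * of_nat (p - 1 choose k)"
  define W :: rat where "W = of_int (wilson_quotient p)"
  define H where "H = harmonic k"
  define q :: rat where "q = of_nat p"
  have "q \<noteq> 0"
    using assms(1) by (simp add: q_def prime_gt_0_nat)
  obtain r where "X - (1 - q * H) = of_nat (p ^ 2) * r" and "coprime_denom (p ^ 2) r"
    using alternating_binomial_pred_prime_cong[OF assms] unfolding X_def H_def q_def
    by (rule rat_congE)
  then have X: "X = 1 - q * H + q ^ 2 * r" and "coprime_denom p r"
    by (simp_all add: q_def coprime_denom_modulus_power algebra_simps)
  have "X \<noteq> 0"
    using assms(2) by (simp add: X_def)
  have "1 / X = (-1) ^ k * (1 / of_nat (p - 1 choose k))"
    by (cases "even k") (simp_all add: X_def)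
  then have "coprime_denom p (1 / X)"
    using coprime_denom_mult[OF coprime_denom_power[OF coprime_denom_uminus[OF coprime_denom_1]]
        coprime_denom_inverse[OF coprime_binomial_pred_prime[OF assms]]] by simp
  have "M k p = (1 + fact (p - 1) / X) / q"
    unfolding X_def q_def using assms(2) by (rule M_eq_binomial)
  also have "fact (p - 1) = q * W - 1"
    unfolding q_def W_def by (rule fact_pred_prime_eq[OF assms(1)])
  also have "(1 + (q * W - 1) / X) / q = (X + (q * W - 1)) / (q * X)"
    using \<open>X \<noteq> 0\<close> \<open>q \<noteq> 0\<close> by (simp add: field_simps)
  also have "X + (q * W - 1) = q * X * (W - H) + q ^ 2 * (r + (W - H) * (H - q * r))"
    unfolding X by (simp add: algebra_simps power2_eq_square)
  also have "(q * X * (W - H) + q ^ 2 * (r + (W - H) * (H - q * r))) / (q * X) =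
      W - H + q * ((r + (W - H) * (H - q * r)) * (1 / X))"
    using \<open>X \<noteq> 0\<close> \<open>q \<noteq> 0\<close> by (simp add: field_simps power2_eq_square)
  finally have "M k p - (W - H) = q * ((r + (W - H) * (H - q * r)) * (1 / X))"
    by simp
  moreover have "coprime_denom p (W - H)" "coprime_denom p (H - q * r)"
    unfolding W_def H_def q_def using coprime_denom_harmonic[OF assms] \<open>coprime_denom p r\<close>
    by (simp_all add: coprime_denom_diff coprime_denom_mult)
  then have "coprime_denom p ((r + (W - H) * (H - q * r)) * (1 / X))"
    using \<open>coprime_denom p r\<close> \<open>coprime_denom p (1 / X)\<close>
    by (intro coprime_denom_mult[OF coprime_denom_add[OF _ coprime_denom_mult]])
  ultimately show ?thesis
    unfolding W_def H_def q_def by (rule rat_congI)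
qed

lemma sum_alternating_signs: "(\<Sum>k=0..2*h. (-1) ^ k) = (1 :: 'a :: ring_1)"
  by (induction h) (simp_all add: numeral_2_eq_2)

lemma sum_alternating_harmonic: "(\<Sum>k=0..2*h. (-1) ^ k * harmonic k) = harmonic h / 2"
proof (induction h)
  case 0
  show ?case by (simp add: harmonic_def)
next
  case (Suc h)
  have "2 * Suc h = Suc (Suc (2 * h))"
    by simp
  then have "(\<Sum>k=0..2 * Suc h. (-1) ^ k * harmonic k) =
      harmonic h / 2 - harmonic (Suc (2 * h)) + harmonic (Suc (Suc (2 * h)))"
    using Suc by simp
  also have "\<dots> = harmonic h / 2 + 1 / of_nat (Suc (Suc (2 * h)))"
    by (simp only: harmonic_Suc[of "Suc (2 * h)"])
  also have "\<dots> = harmonic (Suc h) / 2"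
    by (simp add: harmonic_Suc field_simps)
  finally show ?case .
qed

lemma Zplus_cong:
  assumes "prime p" "odd p"
  shows "rat_cong (Zplus p)
    (of_int (wilson_quotient p) - harmonic ((p - 1) div 2) / 2) p"
proof -
  define h where "h = (p - 1) div 2"
  have p: "p - 1 = 2 * h"
    unfolding h_def using assms(2) by simp
  define W where "W = (of_int (wilson_quotient p) :: rat)"
  have "rat_cong ((-1) ^ k * M k p) ((-1) ^ k * (W - harmonic k)) p" if "k \<in> {0..2*h}" for k
  proof (rule rat_cong_mult_left)
    have "k < p"
      using that p prime_gt_0_nat[OF assms(1)] by simp
    then show "rat_cong (M k p) (W - harmonic k) p"
      unfolding W_def by (rule M_cong[OF assms(1)])
    show "coprime_denom p ((-1) ^ k)"
      by (intro coprime_denom_power coprime_denom_uminus coprime_denom_1)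
  qed
  then have "rat_cong (Zplus p) (\<Sum>k=0..2*h. (-1) ^ k * (W - harmonic k)) p"
    unfolding Zplus_def p by (rule rat_cong_sum)
  also have "(\<Sum>k=0..2*h. (-1) ^ k * (W - harmonic k)) =
      W * (\<Sum>k=0..2*h. (-1) ^ k) - (\<Sum>k=0..2*h. (-1) ^ k * harmonic k)"
    by (simp add: right_diff_distrib left_diff_distrib sum_subtractf sum_distrib_left mult.commute)
  also have "\<dots> = W - harmonic h / 2"
    by (simp only: sum_alternating_signs sum_alternating_harmonic mult_1_right)
  finally show ?thesis
    unfolding W_def h_def .
qed

lemma fps_exp_1_minus_1_ne_0: "(fps_exp 1 - 1 :: rat fps) \<noteq> 0"
proof
  assume "(fps_exp 1 - 1 :: rat fps) = 0"
  then have "(fps_exp 1 - 1 :: rat fps) $ 1 = 0"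
    by simp
  then show False
    by simp
qed

lemma bernoulli_fps_times: "bernoulli_fps * (fps_exp 1 - 1) = fps_X"
proof -
  have "subdegree (fps_exp 1 - 1 :: rat fps) \<le> 1"
    by (rule subdegree_leI) simp
  then show ?thesis
    unfolding bernoulli_fps_def using fps_times_divide_eq[OF fps_exp_1_minus_1_ne_0] by simp
qed

lemma fps_exp_1_minus_1_times_sum:
  "(fps_exp 1 - 1) * (\<Sum>j<N. fps_exp (of_nat j)) =
    (fps_exp (of_nat N) - 1 :: 'a :: field_char_0 fps)"
proof (induction N)
  case (Suc N)
  have "fps_exp (of_nat (Suc N)) = fps_exp 1 * (fps_exp (of_nat N) :: 'a fps)"
    using fps_exp_add_mult[of 1 "of_nat N :: 'a"] by (simp add: add.commute)
  then show ?case
    using Suc by (simp add: algebra_simps)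
qed simp

lemma sum_of_powers_bernoulli:
  "(\<Sum>j<N. of_nat j ^ n :: rat) =
     (\<Sum>i\<le>n. of_nat (n choose i) * bernoulli i * of_nat N ^ (n + 1 - i) / of_nat (n + 1 - i))"
proof -
  have gen: "fps_X * (\<Sum>j<N. fps_exp (of_nat j)) = bernoulli_fps * (fps_exp (of_nat N) - 1)"
    using fps_exp_1_minus_1_times_sum[of N] by (metis bernoulli_fps_times mult.assoc)
  have "(fps_X * (\<Sum>j<N. fps_exp (of_nat j)) :: rat fps) $ Suc n = (\<Sum>j<N. of_nat j ^ n) / fact n"
    by (simp add: fps_sum_nth sum_divide_distrib)
  moreover have "(bernoulli_fps * (fps_exp (of_nat N) - 1)) $ Suc n =
      (\<Sum>i\<le>n. bernoulli i * of_nat N ^ (Suc n - i) / (fact (Suc n - i) * fact i))"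
    by (simp add: fps_mult_nth atLeast0AtMost bernoulli_def)
  moreover have "bernoulli i * of_nat N ^ (Suc n - i) / (fact (Suc n - i) * fact i) =
      of_nat (n choose i) * bernoulli i * of_nat N ^ (n + 1 - i) / of_nat (n + 1 - i) / fact n"
    if i: "i \<le> n" for i
  proof -
    obtain m where m: "n = i + m"
      using le_Suc_ex[OF i] by blast
    have C: "(of_nat (n choose i) :: rat) = fact n / (fact i * fact m)"
      using binomial_fact[OF i] m by simp
    have "Suc n - i = Suc m" "n + 1 - i = Suc m"
      using m by simp_all
    moreover define s :: rat where "s = of_nat (Suc m)"
    moreover have "s \<noteq> 0" "fact (Suc m) = s * fact m"
      by (simp_all add: s_def)
    ultimately show ?thesis
      unfolding C by (simp del: of_nat_Suc fact_Suc add: s_def[symmetric] field_simps)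
  qed
  ultimately have "(\<Sum>j<N. of_nat j ^ n) / fact n =
      (\<Sum>i\<le>n. of_nat (n choose i) * bernoulli i * of_nat N ^ (n + 1 - i) / of_nat (n + 1 - i)) /
        fact n"
    using gen by (simp add: sum_divide_distrib)
  then show ?thesis
    by simp
qed

lemma bernoulli_odd_eq_0:
  assumes "odd n" "n \<noteq> 1"
  shows "bernoulli n = 0"
proof -
  let ?B = "bernoulli_fps" and ?E = "fps_exp 1 :: rat fps"
  have X0: "(- fps_X :: rat fps) $ 0 = 0"
    by simp
  have "?E oo - fps_X = fps_exp (-1)"
    by (simp add: fps_compose_uminus' fps_eq_iff power_minus')
  then have reflected: "(?B oo - fps_X) * (fps_exp (-1) - 1) = - fps_X"
    using arg_cong[OF bernoulli_fps_times, of "\<lambda>f. f oo - fps_X"]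
    by (simp add: fps_compose_mult_distrib[OF X0] fps_compose_sub_distrib)
  have "?E * fps_exp (-1) = 1"
    using fps_exp_add_mult[of "1::rat" "-1"] by simp
  then have "?E - 1 = (fps_exp (-1) - 1) * (- ?E)"
    by (simp add: algebra_simps)
  then have "(?B oo - fps_X) * (?E - 1) = (?B oo - fps_X) * (fps_exp (-1) - 1) * (- ?E)"
    by (simp only: mult.assoc)
  also have "\<dots> = fps_X * ?E"
    unfolding reflected by simp
  also have "\<dots> = (?B + fps_X) * (?E - 1)"
    using bernoulli_fps_times by (simp add: algebra_simps)
  finally have "?B oo - fps_X = ?B + fps_X"
    using fps_exp_1_minus_1_ne_0 by simp
  then have "(?B oo - fps_X) $ n = (?B + fps_X) $ n"
    by simp
  then have "(-1) ^ n * ?B $ n = ?B $ n"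
    using assms(2) by (simp add: fps_compose_uminus')
  then show ?thesis
    using assms(1) by (simp add: bernoulli_def)
qed

lemma sum_of_powers_minus_bernoulli:
  "(\<Sum>j<N. of_nat j ^ n) - of_nat N * bernoulli n =
     (\<Sum>i<n. of_nat (n choose i) * (of_nat N * bernoulli i) *
        (of_nat N ^ (n - i) / of_nat (Suc (n - i))))"
proof -
  have "(\<Sum>j<N. of_nat j ^ n) = of_nat N * bernoulli n +
      (\<Sum>i<n. of_nat (n choose i) * bernoulli i * of_nat N ^ (n + 1 - i) / of_nat (n + 1 - i))"
    unfolding sum_of_powers_bernoulli by (simp add: lessThan_Suc_atMost[symmetric])
  also have "(\<Sum>i<n. of_nat (n choose i) * bernoulli i * of_nat N ^ (n + 1 - i) /
        of_nat (n + 1 - i)) =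
      (\<Sum>i<n. of_nat (n choose i) * (of_nat N * bernoulli i) *
        (of_nat N ^ (n - i) / of_nat (Suc (n - i))))"
  proof (rule sum.cong[OF refl])
    fix i
    assume "i \<in> {..<n}"
    then have "n + 1 - i = Suc (n - i)"
      by auto
    then show "of_nat (n choose i) * bernoulli i * of_nat N ^ (n + 1 - i) / of_nat (n + 1 - i) =
        of_nat (n choose i) * (of_nat N * bernoulli i) *
          (of_nat N ^ (n - i) / of_nat (Suc (n - i)) :: rat)"
      by (simp del: of_nat_Suc)
  qed
  finally show ?thesis
    by simp
qed

lemma bernoulli_2: "bernoulli 2 = 1 / 6"
  and bernoulli_4: "bernoulli 4 = - 1 / 30"
proof -
  have sum: "(\<Sum>i\<le>n. of_nat (n choose i) * bernoulli i / of_nat (n + 1 - i)) =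
      (if n = 0 then 1 else 0)"
    for n
    using sum_of_powers_bernoulli[where N = 1 and n = n] by (simp add: power_0_left)
  have B0: "bernoulli 0 = 1"
    using sum[of 0] by simp
  have B1: "bernoulli 1 = - 1 / 2"
    using sum[of 1] B0 by (simp add: eval_nat_numeral)
  show B2: "bernoulli 2 = 1 / 6"
    using sum[of 2] B0 B1 by (simp add: eval_nat_numeral)
  have "bernoulli 3 = 0"
    by (rule bernoulli_odd_eq_0) simp_all
  then show "bernoulli 4 = - 1 / 30"
    using sum[of 4] B0 B1 B2 by (simp add: eval_nat_numeral)
qed

lemma less_power_self:
  assumes "2 \<le> b"
  shows "n < b ^ n"
proof -
  have "n < 2 ^ n"
    by (rule less_exp)
  also have "\<dots> \<le> b ^ n"
    using assms by (rule power_mono) simp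
  finally show ?thesis .
qed

lemma coprime_denom_times_bernoulli:
  assumes "prime p"
  shows "coprime_denom p (of_nat p * bernoulli n)"
proof (induction n rule: less_induct)
  case (less n)
  have eq: "of_nat p * bernoulli n = (\<Sum>j<p. of_nat j ^ n) -
      (\<Sum>i<n. of_nat (n choose i) * (of_nat p * bernoulli i) *
        (of_nat p ^ (n - i) / of_nat (Suc (n - i))))"
    using sum_of_powers_minus_bernoulli[where N = p and n = n] by linarith
  have frac: "coprime_denom p (of_nat p ^ (n - i) / of_nat (Suc (n - i)))" for i
    using less_power_self[OF prime_ge_2_nat[OF assms], of "Suc (n - i)"]
    by (intro coprime_denom_prime_power_divide[OF assms]) simp_all
  show ?case
    unfolding eq
    by (intro coprime_denom_diff coprime_denom_sum less.IH frac coprime_denom_mult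
        coprime_denom_power coprime_denom_of_nat) simp
qed

text \<open>The bound \<open>5 \<le> p\<close> is sharp: for \<open>p = 3\<close> and \<open>k = 0\<close> the quotient is \<open>1 / 3\<close>.\<close>

lemma coprime_denom_prime_power_divide_plus_3:
  assumes "prime p" "5 \<le> p"
  shows "coprime_denom p (of_nat p ^ k / of_nat (k + 3))"
proof (rule coprime_denom_prime_power_divide[OF assms(1)])
  have "k + 3 < 5 * 2 ^ k"
    using less_exp[of k] by linarith
  also have "\<dots> \<le> p * p ^ k"
    using assms(2) by (intro mult_mono power_mono) simp_all
  finally show "k + 3 < p ^ Suc k"
    by simp
qed simp

lemma bernoulli_sum_of_powers_cong:
  assumes "prime p" "5 \<le> p" "even n" "4 \<le> n"
  shows "rat_cong (of_nat p * bernoulli n) (\<Sum>j<p. of_nat j ^ n) (p ^ 2)"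
proof -
  define t where "t i = of_nat (n choose i) * (of_nat p * bernoulli i) *
    (of_nat p ^ (n - i) / of_nat (Suc (n - i)) :: rat)" for i
  define u where "u i = of_nat (n choose i) * (of_nat p * bernoulli i) *
    (of_nat p ^ (n - 2 - i) / of_nat (Suc (n - i)) :: rat)" for i
  have "{..<n} = insert (n - 1) {..<n - 1}"
    using assms(4) by auto
  moreover have "bernoulli (n - 1) = 0"
    using assms(3,4) by (intro bernoulli_odd_eq_0) simp_all
  ultimately have "(\<Sum>i<n. t i) = (\<Sum>i<n - 1. t i)"
    by (simp add: t_def)
  also have "\<dots> = (\<Sum>i<n - 1. of_nat p ^ 2 * u i)"
  proof (rule sum.cong[OF refl])
    fix i
    assume "i \<in> {..<n - 1}"
    then have "n - i = 2 + (n - 2 - i)"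
      by auto
    then have "(of_nat p :: rat) ^ (n - i) = of_nat p ^ 2 * of_nat p ^ (n - 2 - i)"
      by (simp only: power_add)
    then show "t i = of_nat p ^ 2 * u i"
      unfolding t_def u_def by (simp only: divide_inverse mult_ac)
  qed
  finally have "(\<Sum>j<p. of_nat j ^ n) - of_nat p * bernoulli n = of_nat (p ^ 2) * (\<Sum>i<n - 1. u i)"
    using sum_of_powers_minus_bernoulli[where N = p and n = n] by (simp add: t_def sum_distrib_left)
  moreover have "coprime_denom p (u i)" if "i < n - 1" for i
  proof -
    have "Suc (n - i) = (n - 2 - i) + 3"
      using that by simp
    then have "coprime_denom p (of_nat p ^ (n - 2 - i) / of_nat (Suc (n - i)))"
      using coprime_denom_prime_power_divide_plus_3[OF assms(1,2), of "n - 2 - i"] by (simp only:)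
    then show ?thesis
      unfolding u_def
      using coprime_denom_mult[OF coprime_denom_mult[OF coprime_denom_of_nat
          coprime_denom_times_bernoulli[OF assms(1)]]] by blast
  qed
  ultimately show ?thesis
    by (intro rat_cong_sym[OF rat_congI[where c = "\<Sum>i<n - 1. u i"]])
      (auto simp: coprime_denom_modulus_power intro: coprime_denom_sum)
qed

lemma prod_cong_one_plus_sum:
  fixes a :: "'a \<Rightarrow> int"
  assumes "finite A" "\<And>j. j \<in> A \<Longrightarrow> [a j = 1] (mod q)"
  shows "[(\<Prod>j\<in>A. a j) = 1 + (\<Sum>j\<in>A. a j - 1)] (mod q ^ 2)"
  using assms
proof (induction A rule: finite_induct)
  case (insert x A)
  let ?P = "\<Prod>j\<in>A. a j" and ?S = "\<Sum>j\<in>A. a j - 1"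
  have "q dvd a x - 1" "q dvd ?S"
    using insert.prems by (auto simp: cong_iff_dvd_diff intro: dvd_sum)
  then have "q ^ 2 dvd (a x - 1) * ?S"
    by (simp add: power2_eq_square mult_dvd_mono)
  have "(\<Prod>j\<in>insert x A. a j) = a x * ?P"
    using insert(1,2) by simp
  also have "[\<dots> = a x * (1 + ?S)] (mod q ^ 2)"
    using insert by (intro cong_scalar_left) simp
  also have "a x * (1 + ?S) = 1 + (a x - 1 + ?S) + (a x - 1) * ?S"
    by (simp add: algebra_simps)
  also have "[\<dots> = 1 + (a x - 1 + ?S)] (mod q ^ 2)"
    using \<open>q ^ 2 dvd (a x - 1) * ?S\<close> by (simp add: cong_iff_dvd_diff)
  also have "1 + (a x - 1 + ?S) = 1 + (\<Sum>j\<in>insert x A. a j - 1)"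
    using insert(1,2) by simp
  finally show ?case .
qed simp

lemma one_plus_mult_power_cong: "[(1 + q * x) ^ m = 1 + int m * q * x] (mod q ^ 2)"
proof (induction m)
  case (Suc m)
  have "(1 + q * x) ^ Suc m = (1 + q * x) * (1 + q * x) ^ m"
    by simp
  also have "[\<dots> = (1 + q * x) * (1 + int m * q * x)] (mod q ^ 2)"
    using Suc by (rule cong_scalar_left)
  also have "(1 + q * x) * (1 + int m * q * x) = 1 + int (Suc m) * q * x + q ^ 2 * (int m * x ^ 2)"
    by (simp add: algebra_simps power2_eq_square)
  also have "[\<dots> = 1 + int (Suc m) * q * x] (mod q ^ 2)"
    by (simp add: cong_iff_dvd_diff)
  finally show ?case .
qed simp

lemma fermat_theorem_int:
  assumes "prime p" "0 < j" "j < p"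
  shows "[int j ^ (p - 1) = 1] (mod int p)"
proof -
  have "\<not> p dvd j"
    using assms(2,3) by (auto dest: dvd_imp_le)
  then have "[j ^ (p - 1) = 1] (mod p)"
    by (rule fermat_theorem[OF assms(1)])
  then have "[int (j ^ (p - 1)) = int 1] (mod int p)"
    by (simp only: cong_int_iff)
  then show ?thesis
    by simp
qed

lemma prod_power_pred_prime:
  assumes "prime p" "odd p"
  shows "(\<Prod>j\<in>{1..<p}. int j ^ (p - 1)) = (1 - int p * wilson_quotient p) ^ (p - 1)"
proof -
  have "p = Suc (p - 1)"
    using prime_gt_0_nat[OF assms(1)] by simp
  have "(\<Prod>j\<in>{1..<p}. int j ^ (p - 1)) = (\<Prod>j\<in>{1..<p}. int j) ^ (p - 1)"
    by (rule prod_power_distrib[symmetric])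
  also have "(\<Prod>j\<in>{1..<p}. int j) = fact (p - 1)"
    by (subst \<open>p = Suc (p - 1)\<close>) (simp only: atLeastLessThanSuc_atLeastAtMost fact_prod of_nat_prod)
  also have "fact (p - 1) = - (1 - int p * wilson_quotient p)"
    unfolding fact_pred_prime_eq[OF assms(1)] by simp
  also have "(- (1 - int p * wilson_quotient p)) ^ (p - 1) =
      (1 - int p * wilson_quotient p) ^ (p - 1)"
    using assms(2) by (intro power_minus_even) simp
  finally show ?thesis .
qed

lemma lerch_formula:
  assumes "prime p" "odd p"
  shows "[(\<Sum>j\<in>{1..<p}. int j ^ (p - 1) - 1) = int p * wilson_quotient p] (mod int p ^ 2)"
proof -
  define n where "n = p - 1"
  define W where "W = wilson_quotient p"
  have "p = Suc n"
    using prime_gt_0_nat[OF assms(1)] by (simp add: n_def)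
  have fermat: "[int j ^ n = 1] (mod int p)" if "j \<in> {1..<p}" for j
    using that unfolding n_def by (intro fermat_theorem_int[OF assms(1)]) simp_all
  have product: "(\<Prod>j\<in>{1..<p}. int j ^ n) = (1 + int p * (- W)) ^ n"
    using prod_power_pred_prime[OF assms] by (simp add: n_def W_def)
  have "[(\<Prod>j\<in>{1..<p}. int j ^ n) = 1 + (\<Sum>j\<in>{1..<p}. int j ^ n - 1)] (mod int p ^ 2)"
    using fermat by (intro prod_cong_one_plus_sum) simp_all
  then have "[1 + (\<Sum>j\<in>{1..<p}. int j ^ n - 1) = (\<Prod>j\<in>{1..<p}. int j ^ n)] (mod int p ^ 2)"
    by (rule cong_sym)
  also have "[(\<Prod>j\<in>{1..<p}. int j ^ n) = 1 + int n * int p * (- W)] (mod int p ^ 2)"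
    unfolding product by (rule one_plus_mult_power_cong)
  finally have "[(\<Sum>j\<in>{1..<p}. int j ^ n - 1) = int n * int p * (- W)] (mod int p ^ 2)"
    by (simp only: cong_add_lcancel)
  also have "int n * int p * (- W) = int p * W - int p ^ 2 * W"
    using \<open>p = Suc n\<close> by (simp add: algebra_simps power2_eq_square)
  also have "[\<dots> = int p * W] (mod int p ^ 2)"
    by (simp add: cong_iff_dvd_diff)
  finally show ?thesis
    unfolding n_def W_def .
qed

lemma sum_of_powers_wilson_quotient_cong:
  assumes "prime p" "odd p"
  shows "[(\<Sum>j<p. int j ^ (2 * (p - 1))) - (\<Sum>j<p. int j ^ (p - 1)) = int p * wilson_quotient p]
    (mod int p ^ 2)"
proof -
  define a where "a j = int j ^ (p - 1)" for j
  have "p - 1 > 0"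
    using prime_ge_2_nat[OF assms(1)] by simp
  have "int p dvd a j - 1" if "j \<in> {1..<p}" for j
    using fermat_theorem_int[OF assms(1)] that by (simp add: a_def cong_iff_dvd_diff)
  then have quadratic: "[(\<Sum>j\<in>{1..<p}. (a j - 1) ^ 2) = 0] (mod int p ^ 2)"
    by (auto simp: cong_0_iff intro!: dvd_sum dvd_power_same)
  have "(\<Sum>j<p. int j ^ (2 * (p - 1))) - (\<Sum>j<p. int j ^ (p - 1)) =
      (\<Sum>j<p. int j ^ (2 * (p - 1)) - int j ^ (p - 1))"
    by (simp add: sum_subtractf)
  also have "\<dots> = (\<Sum>j\<in>{1..<p}. int j ^ (2 * (p - 1)) - int j ^ (p - 1))"
    using \<open>p - 1 > 0\<close> by (intro sum.mono_neutral_right) (auto simp: Suc_le_eq power_0_left)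
  also have "\<dots> = (\<Sum>j\<in>{1..<p}. a j - 1) + (\<Sum>j\<in>{1..<p}. (a j - 1) ^ 2)"
    unfolding sum.distrib[symmetric] a_def power_even_eq
    by (simp add: power2_eq_square algebra_simps)
  also have "[\<dots> = int p * wilson_quotient p + 0] (mod int p ^ 2)"
    using lerch_formula[OF assms] quadratic unfolding a_def by (rule cong_add)
  finally show ?thesis
    by simp
qed

lemma bernoulli_diff_cong:
  assumes "prime p" "odd p"
  shows "rat_cong (bernoulli (2 * (p - 1)) - bernoulli (p - 1)) (of_int (wilson_quotient p)) p"
proof (cases "p = 3")
  case True
  have "wilson_quotient 3 = 1"
    by (simp add: wilson_quotient_def eval_nat_numeral)
  moreover have "coprime (5 :: nat) 3"
    using prime_imp_coprime[of "3 :: nat" 5] by (simp add: coprime_commute)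
  then have "coprime_denom 3 (- 2 * (1 / 5))"
    using coprime_denom_mult[OF coprime_denom_of_int[of 3 "-2"] coprime_denom_inverse[of 5 3]]
    by simp
  ultimately show ?thesis
    using True by (intro rat_congI[where c = "- 2 * (1 / 5)"])
      (simp_all add: bernoulli_2 bernoulli_4)
next
  case False
  let ?W = "of_int (wilson_quotient p) :: rat"
  have "p \<noteq> 2" "p \<noteq> 4"
    using assms(2) by auto
  then have "p \<ge> 5"
    using False prime_ge_2_nat[OF assms(1)] by simp
  have n: "even (p - 1)" "4 \<le> p - 1" "even (2 * (p - 1))" "4 \<le> 2 * (p - 1)"
    using assms(2) \<open>p \<ge> 5\<close> by simp_all
  have "rat_cong (of_int ((\<Sum>j<p. int j ^ (2 * (p - 1))) - (\<Sum>j<p. int j ^ (p - 1))))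
      (of_int (int p * wilson_quotient p)) (p ^ 2)"
    using sum_of_powers_wilson_quotient_cong[OF assms] by (intro rat_cong_of_int) simp
  then have "rat_cong ((\<Sum>j<p. of_nat j ^ (2 * (p - 1))) - (\<Sum>j<p. of_nat j ^ (p - 1)))
      (of_nat p * ?W) (p ^ 2)"
    by simp
  then have "rat_cong (of_nat p * bernoulli (2 * (p - 1)) - of_nat p * bernoulli (p - 1))
      (of_nat p * ?W) (p ^ 2)"
    by (rule rat_cong_trans[OF rat_cong_diff[OF
          bernoulli_sum_of_powers_cong[OF assms(1) \<open>p \<ge> 5\<close> n(3,4)]
          bernoulli_sum_of_powers_cong[OF assms(1) \<open>p \<ge> 5\<close> n(1,2)]]])
  then have "rat_cong (of_nat p * (bernoulli (2 * (p - 1)) - bernoulli (p - 1)))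
      (of_nat p * ?W) (p * p)"
    by (simp add: right_diff_distrib power2_eq_square)
  then show ?thesis
    using prime_gt_0_nat[OF assms(1)] by (rule rat_cong_cancel_left)
qed

theorem mainTheorem12:
  fixes p :: nat
  assumes "prime p" and "odd p"
  shows "rat_cong (Zplus p)
           (bernoulli (2 * (p - 1)) - bernoulli (p - 1) - harmonic ((p - 1) div 2) / 2) p
       \<and> rat_cong (Zplus p) ((M 0 p + M ((p - 1) div 2) p) / 2) p"
proof
  define h where "h = (p - 1) div 2"
  define W where "W = (of_int (wilson_quotient p) :: rat)"
  have Z: "rat_cong (Zplus p) (W - harmonic h / 2) p"
    unfolding W_def h_def using assms by (rule Zplus_cong)
  have "rat_cong (bernoulli (2 * (p - 1)) - bernoulli (p - 1) - harmonic h / 2)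
      (W - harmonic h / 2) p"
    unfolding W_def using bernoulli_diff_cong[OF assms] by (rule rat_cong_diff) simp
  then show "rat_cong (Zplus p) (bernoulli (2 * (p - 1)) - bernoulli (p - 1) - harmonic h / 2) p"
    by (rule rat_cong_trans[OF Z rat_cong_sym])
  have "p \<noteq> 2"
    using assms(2) by auto
  then have "0 < p" "h < p" "2 < p"
    using prime_ge_2_nat[OF assms(1)] by (simp_all add: h_def)
  moreover have "coprime_denom p (1 / 2)"
    using coprime_denom_inverse_less_prime[OF assms(1), of 2] \<open>2 < p\<close> by simp
  ultimately have "rat_cong ((1 / 2) * (M 0 p + M h p))
      ((1 / 2) * ((W - harmonic 0) + (W - harmonic h))) p"
    unfolding W_def by (intro rat_cong_mult_left rat_cong_add M_cong assms(1)) simp_all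
  then have "rat_cong ((M 0 p + M h p) / 2) (W - harmonic h / 2) p"
    by (simp add: harmonic_def field_simps)
  then show "rat_cong (Zplus p) ((M 0 p + M h p) / 2) p"
    by (rule rat_cong_trans[OF Z rat_cong_sym])
qed

end
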